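(* Let $\Pi_n=\{\pi_1,\ldots,\pi_n\}$ be a finite set of policies of a discrete mean-field game (setting in the context) with $J$ $\mu$-diff-affine, and let $M_{ij}=J(\pi_i,\mu^{\pi_j})$. Let $\rho$ be a finitely supported distribution over $\Delta(\Pi_n)$ (writing $\nu_i=\nu(\pi_i)$). (i) If $\sum_i\max_k\sum_\nu\rho(\nu)\,\nu_i\sum_j\nu_j\big(M_{kj}-M_{ij}\big)\le0$, then $\sum_i\max_k\sum_\nu\rho(\nu)\nu_i\big(J(\pi_k,\mu(\nu))-J(\pi_i,\mu(\nu))\big)\le0$; in particular $\rho$ is a mean-field correlated equilibrium when deviations are restricted to $\Pi_n$. (ii) If $\max_k\sum_\nu\rho(\nu)\sum_i\sum_j\nu_i\nu_j\big(M_{kj}-M_{ij}\big)\le0$, then $\max_k\sum_\nu\rho(\nu)\big(J(\pi_k,\mu(\nu))-J(\pi(\nu),\mu(\nu))\big)\le0$, i.e. $\rho$ is a mean-field coarse correlated equilibrium when deviations are restricted to $\Pi_n$.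
   Context: A discrete mean-field game consists of finite state set $\mathcal X$, finite action set $\mathcal A$, reward $r:\mathcal X\times\mathcal A\times\Delta(\mathcal X)\to\mathbb R$, transitions $p(x'\mid x,a)$ independent of the population distribution, initial distribution $\mu_0$. A policy is $\pi:\mathcal X\to\Delta(\mathcal A)$; $\mu^\pi$ is its state occupancy measure; $J(\pi,\mu)=\sum_{x,a}\mu^\pi(x)\pi(x,a)r(x,a,\mu)$. For $\nu\in\Delta(\Pi_n)$, $\mu(\nu)=\sum_j\nu(\pi_j)\mu^{\pi_j}$ and $J(\pi(\nu),\mu)=\sum_i\nu(\pi_i)J(\pi_i,\mu)$, where $\pi(\nu)$ samples a policy from $\nu$ at the start and plays it. $J$ is $\mu$-diff-affine if for all policies $\pi,\pi'$ the map $\mu\mapsto J(\pi,\mu)-J(\pi',\mu)$ is affine. A mean-field correlated equilibrium (deviations in $\Pi_n$) is a $\rho$ with $\sum_\nu\rho(\nu)\nu(\pi_i)(J(\pi_k,\mu(\nu))-J(\pi_i,\mu(\nu)))\le0$ for all $i,k$. *)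

theory Defs
  imports Complex_Main
begin

definition is_dist :: "('b::finite \<Rightarrow> real) \<Rightarrow> bool" where
  "is_dist d \<longleftrightarrow> (\<forall>b. 0 \<le> d b) \<and> (\<Sum>b\<in>UNIV. d b) = 1"

(* Distributions over the indices {0..<n} of the finite policy set Pi_n;
   nu i = nu(pi_i), canonically 0 outside the index range *)
definition is_dist_n :: "nat \<Rightarrow> (nat \<Rightarrow> real) \<Rightarrow> bool" where
  "is_dist_n n \<nu> \<longleftrightarrow> (\<forall>i<n. 0 \<le> \<nu> i) \<and> (\<forall>i\<ge>n. \<nu> i = 0) \<and> (\<Sum>i<n. \<nu> i) = 1"

definition is_policy :: "('x::finite \<Rightarrow> 'a::finite \<Rightarrow> real) \<Rightarrow> bool" where
  "is_policy \<pi> \<longleftrightarrow> (\<forall>x. is_dist (\<pi> x))"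

(* J(pi, mu) = sum_{x,a} mu^pi(x) pi(x,a) r(x,a,mu); occ pi = mu^pi *)
definition Jv :: "(('x::finite \<Rightarrow> 'a::finite \<Rightarrow> real) \<Rightarrow> 'x \<Rightarrow> real)
     \<Rightarrow> ('x \<Rightarrow> 'a \<Rightarrow> ('x \<Rightarrow> real) \<Rightarrow> real)
     \<Rightarrow> ('x \<Rightarrow> 'a \<Rightarrow> real) \<Rightarrow> ('x \<Rightarrow> real) \<Rightarrow> real" where
  "Jv occ r \<pi> \<mu> = (\<Sum>x\<in>UNIV. \<Sum>a\<in>UNIV. occ \<pi> x * \<pi> x a * r x a \<mu>)"

definition mu_mix :: "(('x::finite \<Rightarrow> 'a::finite \<Rightarrow> real) \<Rightarrow> 'x \<Rightarrow> real)
     \<Rightarrow> (nat \<Rightarrow> ('x \<Rightarrow> 'a \<Rightarrow> real)) \<Rightarrow> nat \<Rightarrow> (nat \<Rightarrow> real) \<Rightarrow> 'x \<Rightarrow> real" where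
  "mu_mix occ pol n \<nu> = (\<lambda>x. \<Sum>j<n. \<nu> j * occ (pol j) x)"

(* J(pi(nu), mu) = sum_i nu(pi_i) J(pi_i, mu) *)
definition J_mix where
  "J_mix occ r pol n \<nu> \<mu> = (\<Sum>i<n. \<nu> i * Jv occ r (pol i) \<mu>)"

definition mu_diff_affine where
  "mu_diff_affine occ r \<longleftrightarrow>
     (\<forall>\<pi> \<pi>'. is_policy \<pi> \<longrightarrow> is_policy \<pi>' \<longrightarrow>
       (\<forall>\<mu> \<mu>' (t::real). is_dist \<mu> \<longrightarrow> is_dist \<mu>' \<longrightarrow> 0 \<le> t \<longrightarrow> t \<le> 1 \<longrightarrow>
          (let f = (\<lambda>m. Jv occ r \<pi> m - Jv occ r \<pi>' m)
           in f (\<lambda>x. (1 - t) * \<mu> x + t * \<mu>' x) = (1 - t) * f \<mu> + t * f \<mu>')))"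

(* Mean-field correlated equilibrium with deviations restricted to Pi_n;
   rho is given by its finite support R and weights *)
definition mf_correlated_eq where
  "mf_correlated_eq occ r pol n R \<rho> \<longleftrightarrow>
     (\<forall>i<n. \<forall>k<n. (\<Sum>\<nu>\<in>R. \<rho> \<nu> * \<nu> i *
        (Jv occ r (pol k) (mu_mix occ pol n \<nu>) - Jv occ r (pol i) (mu_mix occ pol n \<nu>))) \<le> 0)"

definition mf_coarse_correlated_eq where
  "mf_coarse_correlated_eq occ r pol n R \<rho> \<longleftrightarrow>
     Max ((\<lambda>k. \<Sum>\<nu>\<in>R. \<rho> \<nu> *
        (Jv occ r (pol k) (mu_mix occ pol n \<nu>) - J_mix occ r pol n \<nu> (mu_mix occ pol n \<nu>))) ` {..<n}) \<le> 0"

end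

theory Submission
  imports Defs
begin

text \<open>Diff-affinity extends from two-point to finite mixtures of occupancy measures, so
  \<open>J(\<pi>\<^sub>k, \<mu>(\<nu>)) - J(\<pi>\<^sub>i, \<mu>(\<nu>)) = \<Sum>\<^sub>j \<nu>\<^sub>j (M\<^sub>k\<^sub>j - M\<^sub>i\<^sub>j)\<close>, and averaging over \<open>\<nu>\<^sub>i\<close> gives the
  coarse deviation gain \<open>\<Sum>\<^sub>i \<Sum>\<^sub>j \<nu>\<^sub>i \<nu>\<^sub>j (M\<^sub>k\<^sub>j - M\<^sub>i\<^sub>j)\<close>. Hence the hypotheses are the conclusions
  rewritten in terms of \<open>M\<close>. For the correlated equilibrium: the deviation \<open>k = i\<close> gains nothing,
  so every maximum over \<open>k\<close> is nonnegative, and a nonpositive sum of them forces each to vanish.\<close>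

lemma is_dist_mixture:
  fixes d :: "nat \<Rightarrow> 'x::finite \<Rightarrow> real"
  assumes "\<And>j. j \<in> A \<Longrightarrow> is_dist (d j)"
    and "\<And>j. j \<in> A \<Longrightarrow> 0 \<le> w j"
    and "(\<Sum>j\<in>A. w j) = 1"
  shows "is_dist (\<lambda>x. \<Sum>j\<in>A. w j * d j x)"
proof -
  have "(\<Sum>x\<in>UNIV. \<Sum>j\<in>A. w j * d j x) = (\<Sum>j\<in>A. w j * (\<Sum>x\<in>UNIV. d j x))"
    by (subst sum.swap) (simp add: sum_distrib_left)
  also have "\<dots> = 1"
    using assms by (simp add: is_dist_def)
  finally show ?thesis
    using assms by (auto intro!: sum_nonneg simp: is_dist_def)
qed

lemma affine_on_mixtures:
  fixes f :: "('x::finite \<Rightarrow> real) \<Rightarrow> real" and d :: "nat \<Rightarrow> 'x \<Rightarrow> real"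
  assumes affine: "\<And>\<mu> \<mu>' t. is_dist \<mu> \<Longrightarrow> is_dist \<mu>' \<Longrightarrow> 0 \<le> t \<Longrightarrow> t \<le> 1 \<Longrightarrow>
             f (\<lambda>x. (1 - t) * \<mu> x + t * \<mu>' x) = (1 - t) * f \<mu> + t * f \<mu>'"
    and "\<And>j. j < m \<Longrightarrow> is_dist (d j)"
    and "\<And>j. j < m \<Longrightarrow> 0 \<le> w j"
    and "(\<Sum>j<m. w j) = 1"
  shows "f (\<lambda>x. \<Sum>j<m. w j * d j x) = (\<Sum>j<m. w j * f (d j))"
  using assms(2-4)
proof (induction m arbitrary: w)
  case 0
  then show ?case by simp
next
  case (Suc m)
  have rest: "(\<Sum>j<m. w j) = 1 - w m" and rest_nonneg: "0 \<le> (\<Sum>j<m. w j)"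
    using Suc.prems by (auto intro!: sum_nonneg)
  show ?case
  proof (cases "w m = 1")
    case True
    then have "\<forall>j\<in>{..<m}. w j = 0"
      using rest Suc.prems(2) by (subst sum_nonneg_eq_0_iff[symmetric]) auto
    with True show ?thesis by simp
  next
    case False
    define t where "t = w m"
    define w' where "w' j = w j / (1 - t)" for j
    have t: "0 \<le> t" "t < 1"
      using False rest rest_nonneg Suc.prems(2) by (auto simp: t_def)
    have w': "\<And>j. j < m \<Longrightarrow> 0 \<le> w' j" "(\<Sum>j<m. w' j) = 1"
      using Suc.prems(2) rest t by (auto simp: w'_def t_def simp flip: sum_divide_distrib)
    have rescale: "w j = (1 - t) * w' j" if "j < m" for j
      using t by (simp add: w'_def)
    have wm: "w m = t"
      by (simp add: t_def)
    have "f (\<lambda>x. \<Sum>j<Suc m. w j * d j x)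
        = f (\<lambda>x. (1 - t) * (\<Sum>j<m. w' j * d j x) + t * d m x)"
      by (simp add: rescale sum_distrib_left mult.assoc wm)
    also have "\<dots> = (1 - t) * f (\<lambda>x. \<Sum>j<m. w' j * d j x) + t * f (d m)"
      using Suc.prems(1) w' t by (intro affine is_dist_mixture) auto
    also have "\<dots> = (\<Sum>j<Suc m. w j * f (d j))"
      using Suc.IH[OF _ w'] Suc.prems(1)
      by (simp add: rescale sum_distrib_left mult.assoc wm)
    finally show ?thesis .
  qed
qed

lemma Jv_diff_mu_mix:
  assumes occ_dist: "\<And>\<pi>. is_policy \<pi> \<Longrightarrow> is_dist (occ \<pi>)"
    and "mu_diff_affine occ r"
    and "is_policy \<pi>" "is_policy \<pi>'"
    and pols: "\<And>j. j < n \<Longrightarrow> is_policy (pol j)"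
    and "is_dist_n n \<nu>"
  shows "Jv occ r \<pi> (mu_mix occ pol n \<nu>) - Jv occ r \<pi>' (mu_mix occ pol n \<nu>)
       = (\<Sum>j<n. \<nu> j * (Jv occ r \<pi> (occ (pol j)) - Jv occ r \<pi>' (occ (pol j))))"
  unfolding mu_mix_def
proof (rule affine_on_mixtures[where f = "\<lambda>\<mu>. Jv occ r \<pi> \<mu> - Jv occ r \<pi>' \<mu>"])
  show "\<And>\<mu> \<mu>' t. is_dist \<mu> \<Longrightarrow> is_dist \<mu>' \<Longrightarrow> 0 \<le> t \<Longrightarrow> t \<le> 1 \<Longrightarrow>
      Jv occ r \<pi> (\<lambda>x. (1 - t) * \<mu> x + t * \<mu>' x) - Jv occ r \<pi>' (\<lambda>x. (1 - t) * \<mu> x + t * \<mu>' x)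
      = (1 - t) * (Jv occ r \<pi> \<mu> - Jv occ r \<pi>' \<mu>) + t * (Jv occ r \<pi> \<mu>' - Jv occ r \<pi>' \<mu>')"
    using assms(2-4) unfolding mu_diff_affine_def Let_def by blast
qed (use occ_dist pols \<open>is_dist_n n \<nu>\<close> in \<open>auto simp: is_dist_n_def\<close>)

lemma Jv_diff_J_mix:
  assumes "(\<Sum>i<n. \<nu> i) = 1"
  shows "Jv occ r \<pi> \<mu> - J_mix occ r pol n \<nu> \<mu> = (\<Sum>i<n. \<nu> i * (Jv occ r \<pi> \<mu> - Jv occ r (pol i) \<mu>))"
  using assms by (simp add: J_mix_def right_diff_distrib sum_subtractf flip: sum_distrib_right)

lemma nonpos_if_sum_Max_nonpos:
  fixes S :: "'i \<Rightarrow> 'i \<Rightarrow> real"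
  assumes "finite A"
    and diag: "\<And>i. i \<in> A \<Longrightarrow> S i i = 0"
    and sum_Max: "(\<Sum>i\<in>A. Max (S i ` A)) \<le> 0"
    and "i \<in> A" "k \<in> A"
  shows "S i k \<le> 0"
proof -
  have Max_nonneg: "0 \<le> Max (S j ` A)" if "j \<in> A" for j
    using \<open>finite A\<close> diag[OF that] that by (auto simp: Max_ge_iff)
  then have "\<forall>j\<in>A. Max (S j ` A) = 0"
    using sum_Max \<open>finite A\<close> by (subst sum_nonneg_eq_0_iff[symmetric]) (auto intro: antisym sum_nonneg)
  then show ?thesis
    using \<open>finite A\<close> \<open>i \<in> A\<close> \<open>k \<in> A\<close> Max_ge[of "S i ` A" "S i k"] by auto
qed

theorem mainTheorem10:
  fixes occ :: "('x::finite \<Rightarrow> 'a::finite \<Rightarrow> real) \<Rightarrow> 'x \<Rightarrow> real"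
    and r :: "'x \<Rightarrow> 'a \<Rightarrow> ('x \<Rightarrow> real) \<Rightarrow> real"
    and pol :: "nat \<Rightarrow> ('x \<Rightarrow> 'a \<Rightarrow> real)"
    and n :: nat
    and R :: "(nat \<Rightarrow> real) set"
    and \<rho> :: "(nat \<Rightarrow> real) \<Rightarrow> real"
    and M :: "nat \<Rightarrow> nat \<Rightarrow> real"
  assumes occ_dist: "\<And>\<pi>. is_policy \<pi> \<Longrightarrow> is_dist (occ \<pi>)"
    and affine: "mu_diff_affine occ r"
    and pols: "\<And>i. i < n \<Longrightarrow> is_policy (pol i)"
    and M_def: "\<And>i j. M i j = Jv occ r (pol i) (occ (pol j))"
    and R_fin: "finite R"
    and R_dist: "\<And>\<nu>. \<nu> \<in> R \<Longrightarrow> is_dist_n n \<nu>"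
    and \<rho>_nonneg: "\<And>\<nu>. \<nu> \<in> R \<Longrightarrow> 0 \<le> \<rho> \<nu>"
    and \<rho>_sum: "(\<Sum>\<nu>\<in>R. \<rho> \<nu>) = 1"
  shows "((\<Sum>i<n. Max ((\<lambda>k. \<Sum>\<nu>\<in>R. \<rho> \<nu> * \<nu> i * (\<Sum>j<n. \<nu> j * (M k j - M i j))) ` {..<n})) \<le> 0
          \<longrightarrow> (\<Sum>i<n. Max ((\<lambda>k. \<Sum>\<nu>\<in>R. \<rho> \<nu> * \<nu> i *
                 (Jv occ r (pol k) (mu_mix occ pol n \<nu>) - Jv occ r (pol i) (mu_mix occ pol n \<nu>))) ` {..<n})) \<le> 0
              \<and> mf_correlated_eq occ r pol n R \<rho>)
       \<and> (Max ((\<lambda>k. \<Sum>\<nu>\<in>R. \<rho> \<nu> * (\<Sum>i<n. \<Sum>j<n. \<nu> i * \<nu> j * (M k j - M i j))) ` {..<n}) \<le> 0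
          \<longrightarrow> mf_coarse_correlated_eq occ r pol n R \<rho>)"
proof -
  have gain: "Jv occ r (pol k) (mu_mix occ pol n \<nu>) - Jv occ r (pol i) (mu_mix occ pol n \<nu>)
      = (\<Sum>j<n. \<nu> j * (M k j - M i j))" if "\<nu> \<in> R" "k < n" "i < n" for \<nu> k i
    using Jv_diff_mu_mix[OF occ_dist affine pols pols pols R_dist] that by (simp add: M_def)
  have coarse_gain: "Jv occ r (pol k) (mu_mix occ pol n \<nu>) - J_mix occ r pol n \<nu> (mu_mix occ pol n \<nu>)
      = (\<Sum>i<n. \<Sum>j<n. \<nu> i * \<nu> j * (M k j - M i j))" if "\<nu> \<in> R" "k < n" for \<nu> k
    using that R_dist[OF that(1)]
    by (simp add: Jv_diff_J_mix is_dist_n_def gain sum_distrib_left mult.assoc)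
  have correlated: "mf_correlated_eq occ r pol n R \<rho>"
    if "(\<Sum>i<n. Max ((\<lambda>k. \<Sum>\<nu>\<in>R. \<rho> \<nu> * \<nu> i * (\<Sum>j<n. \<nu> j * (M k j - M i j))) ` {..<n})) \<le> 0"
    unfolding mf_correlated_eq_def
    using nonpos_if_sum_Max_nonpos[OF _ _ that] by (simp add: gain)
  show ?thesis
    unfolding mf_coarse_correlated_eq_def
    using correlated by (simp add: gain coarse_gain)
qed

end
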